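(* Assume $\lambda_A>0$ (the dataset need not be balanced). Then for every $\theta\in\mathbb R^d$, $$w(\theta)\le 2f_d(\theta)+\frac{\gamma^2}{N}\Big((\phi(s_{N+1})^T(\theta-\theta^* ))^2-(\phi(s_1)^T(\theta-\theta^* ))^2\Big)\le\Big(2+\frac{\gamma^2}{N\lambda_A}\Big)f_d(\theta).$$
   Context: Finite-sample setting. Let $\mathcal S$ be a finite state space, $\phi:\mathcal S\to\mathbb R^d$ a feature map with $\|\phi(s)\|_2\le 1$ for all $s$, $r:\mathcal S\times\mathcal S\to\mathbb R$ a reward function and $\gamma\in[0,1)$. For a pair of states $(s,s')$ and $\theta\in\mathbb R^d$ let $g_{s,s'}(\theta)=(r(s,s')+\gamma\phi(s')^T\theta-\phi(s)^T\theta)\phi(s)$. A dataset is a state trajectory $s_1,\dots,s_{N+1}$, giving the $N$ pairs $(s_t,s_{t+1})$, $t=1,\dots,N$. Let $A_d=\frac1N\sum_{t=1}^N\phi(s_t)(\phi(s_t)-\gamma\phi(s_{t+1}))^T$ and $b_d=\frac1N\sum_{t=1}^N r(s_t,s_{t+1})\phi(s_t)$. Assume $A_d$ is nonsingular and let $\theta^*=A_d^{-1}b_d$. Let $\lambda_A$ denote the minimum eigenvalue of $(A_d+A_d^T)/2$. Define $f_d(\theta)=(\theta-\theta^* )^TA_d(\theta-\theta^* )$ and $w(\theta)=\frac1N\sum_{t=1}^N\|g_{s_t,s_{t+1}}(\theta)-g_{s_t,s_{t+1}}(\theta^* )\|^2$. *)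

theory Defs
  imports "HOL-Analysis.Analysis"
begin

definition outer :: "real ^ 'd \<Rightarrow> real ^ 'd \<Rightarrow> real ^ 'd ^ 'd" where
  "outer u v = (\<chi> i j. u $ i * v $ j)"

definition real_eigenvalues :: "real ^ 'd ^ 'd \<Rightarrow> real set" where
  "real_eigenvalues M = {l. \<exists>v. v \<noteq> 0 \<and> M *v v = l *\<^sub>R v}"

definition min_eigenvalue :: "real ^ 'd ^ 'd \<Rightarrow> real" where
  "min_eigenvalue M = Min (real_eigenvalues M)"

definition td_g :: "('s \<Rightarrow> real ^ 'd) \<Rightarrow> ('s \<Rightarrow> 's \<Rightarrow> real) \<Rightarrow> real \<Rightarrow> 's \<Rightarrow> 's \<Rightarrow> real ^ 'd \<Rightarrow> real ^ 'd" where
  "td_g \<phi> r \<gamma> s s' \<theta> = (r s s' + \<gamma> * (\<phi> s' \<bullet> \<theta>) - \<phi> s \<bullet> \<theta>) *\<^sub>R \<phi> s"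

definition A_d :: "('s \<Rightarrow> real ^ 'd) \<Rightarrow> real \<Rightarrow> nat \<Rightarrow> (nat \<Rightarrow> 's) \<Rightarrow> real ^ 'd ^ 'd" where
  "A_d \<phi> \<gamma> N s = (1 / real N) *\<^sub>R (\<Sum>t=1..N. outer (\<phi> (s t)) (\<phi> (s t) - \<gamma> *\<^sub>R \<phi> (s (Suc t))))"

definition b_d :: "('s \<Rightarrow> real ^ 'd) \<Rightarrow> ('s \<Rightarrow> 's \<Rightarrow> real) \<Rightarrow> nat \<Rightarrow> (nat \<Rightarrow> 's) \<Rightarrow> real ^ 'd" where
  "b_d \<phi> r N s = (1 / real N) *\<^sub>R (\<Sum>t=1..N. r (s t) (s (Suc t)) *\<^sub>R \<phi> (s t))"

definition theta_star where
  "theta_star \<phi> r \<gamma> N s = matrix_inv (A_d \<phi> \<gamma> N s) *v b_d \<phi> r N s"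

definition lambda_A where
  "lambda_A \<phi> \<gamma> N s = min_eigenvalue ((1/2) *\<^sub>R (A_d \<phi> \<gamma> N s + transpose (A_d \<phi> \<gamma> N s)))"

definition f_d where
  "f_d \<phi> r \<gamma> N s \<theta> = (\<theta> - theta_star \<phi> r \<gamma> N s) \<bullet> (A_d \<phi> \<gamma> N s *v (\<theta> - theta_star \<phi> r \<gamma> N s))"

definition w_fun where
  "w_fun \<phi> r \<gamma> N s \<theta> = (1 / real N) * (\<Sum>t=1..N.
     (norm (td_g \<phi> r \<gamma> (s t) (s (Suc t)) \<theta> - td_g \<phi> r \<gamma> (s t) (s (Suc t)) (theta_star \<phi> r \<gamma> N s)))\<^sup>2)"

end

theory Submission
  imports Defs
begin

text \<open>Write \<open>a t = \<phi>(s t) \<bullet> (\<theta> - \<theta>*)\<close>. The two TD updates differ by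
  \<open>(\<gamma> a (t+1) - a t) \<phi>(s t)\<close>, and \<open>f_d = (1/N) \<Sum> a t (a t - \<gamma> a (t+1))\<close>.
  As \<open>\<parallel>\<phi>\<parallel> \<le> 1\<close>, each summand of \<open>w\<close> is at most
  \<open>(\<gamma> a (t+1) - a t)\<^sup>2 = 2 a t (a t - \<gamma> a (t+1)) + \<gamma>\<^sup>2 (a (t+1)\<^sup>2 - a t\<^sup>2) - (1 - \<gamma>\<^sup>2) a t\<^sup>2\<close>,
  and the \<open>\<gamma>\<^sup>2\<close> terms telescope. For the second bound,
  \<open>a (N+1)\<^sup>2 \<le> \<parallel>\<theta> - \<theta>*\<parallel>\<^sup>2 \<le> f_d / \<lambda>_A\<close>: the quadratic form of \<open>A_d\<close> is that of its
  symmetric part, which is bounded below by its least eigenvalue.\<close>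

lemma matrix_vector_mult_sum_left:
  "finite I \<Longrightarrow> sum A I *v (x::real^'n) = (\<Sum>i\<in>I. A i *v x)"
  by (induction I rule: finite_induct) (auto simp: matrix_vector_mult_add_rdistrib)

lemma outer_matrix_vector_mult: "outer u v *v x = (v \<bullet> x) *\<^sub>R (u::real^'n)"
  by (simp add: vec_eq_iff matrix_vector_mult_def outer_def inner_vec_def
      sum_distrib_left algebra_simps)

lemma mat_matrix_vector_mult: "mat c *v x = c *\<^sub>R (x::real^'n)"
  by (simp add: vec_eq_iff matrix_vector_mult_def mat_def if_distrib[of "\<lambda>f. f _"] cong: if_cong)
     (simp add: if_distrib[of "\<lambda>z. z * _"] cong: if_cong)

lemma symmetric_matrix_inner_commute:
  fixes S :: "real^'n^'n"
  assumes "transpose S = S"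
  shows "(S *v x) \<bullet> y = x \<bullet> (S *v y)"
  by (metis assms dot_lmul_matrix transpose_matrix_vector)

lemma finite_real_eigenvalues_symmetric:
  fixes S :: "real^'n^'n"
  assumes sym: "transpose S = S"
  shows "finite (real_eigenvalues S)"
proof -
  define v where "v l = (SOME v. v \<noteq> 0 \<and> S *v v = l *\<^sub>R v)" for l
  have v: "v l \<noteq> 0 \<and> S *v v l = l *\<^sub>R v l" if "l \<in> real_eigenvalues S" for l
    using that unfolding real_eigenvalues_def v_def mem_Collect_eq by (rule someI_ex)
  have inj: "inj_on v (real_eigenvalues S)"
  proof (rule inj_onI)
    fix a b assume a: "a \<in> real_eigenvalues S" and b: "b \<in> real_eigenvalues S" and "v a = v b"
    then have "a *\<^sub>R v a = b *\<^sub>R v a" using v[OF a] v[OF b] by metis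
    then show "a = b" using v[OF a] by simp
  qed
  have "pairwise orthogonal (v ` real_eigenvalues S)"
  proof (rule pairwiseI)
    fix y z assume "y \<in> v ` real_eigenvalues S" "z \<in> v ` real_eigenvalues S" "y \<noteq> z"
    then obtain a b where a: "a \<in> real_eigenvalues S" and b: "b \<in> real_eigenvalues S"
      and "y = v a" "z = v b" "a \<noteq> b" by blast
    have "a * (v a \<bullet> v b) = (S *v v a) \<bullet> v b" using v[OF a] by simp
    also have "\<dots> = v a \<bullet> (S *v v b)" by (rule symmetric_matrix_inner_commute[OF sym])
    also have "\<dots> = b * (v a \<bullet> v b)" using v[OF b] by simp
    finally show "orthogonal y z" using \<open>y = v a\<close> \<open>z = v b\<close> \<open>a \<noteq> b\<close> by (simp add: orthogonal_def)
  qed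
  moreover have "0 \<notin> v ` real_eigenvalues S" using v by auto
  ultimately have "independent (v ` real_eigenvalues S)"
    by (rule pairwise_orthogonal_independent)
  then have "finite (v ` real_eigenvalues S)" using independent_bound_general by auto
  then show ?thesis using inj by (rule finite_imageD)
qed

lemma linear_coeff_eq_0_if_quadratic_nonneg:
  fixes c q :: real
  assumes "0 \<le> q" and nonneg: "\<And>t. 0 \<le> 2 * t * c + t\<^sup>2 * q"
  shows "c = 0"
proof (rule ccontr)
  assume "c \<noteq> 0"
  define t where "t = - c / (q + 1)"
  have "q + 1 \<noteq> 0" using \<open>0 \<le> q\<close> by simp
  then have "2 * t * c + t\<^sup>2 * q = - c\<^sup>2 * (q + 2) / (q + 1)\<^sup>2"
    by (simp add: t_def divide_simps power2_eq_square) algebra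
  also have "\<dots> < 0"
    using \<open>c \<noteq> 0\<close> \<open>0 \<le> q\<close> by (simp add: divide_neg_pos mult_neg_pos)
  finally show False using nonneg[of t] by simp
qed

lemma psd_matrix_kernel:
  fixes P :: "real^'n^'n"
  assumes sym: "transpose P = P" and psd: "\<And>v. 0 \<le> v \<bullet> (P *v v)" and "u \<bullet> (P *v u) = 0"
  shows "P *v u = 0"
proof -
  have "v \<bullet> (P *v u) = 0" for v
  proof (rule linear_coeff_eq_0_if_quadratic_nonneg)
    show "0 \<le> v \<bullet> (P *v v)" by (rule psd)
    fix t :: real
    have "u \<bullet> (P *v v) = v \<bullet> (P *v u)"
      by (metis inner_commute symmetric_matrix_inner_commute[OF sym])
    then have "(u + t *\<^sub>R v) \<bullet> (P *v (u + t *\<^sub>R v))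
        = u \<bullet> (P *v u) + 2 * t * (v \<bullet> (P *v u)) + t\<^sup>2 * (v \<bullet> (P *v v))"
      by (simp add: matrix_vector_right_distrib matrix_vector_mult_scaleR inner_add_left
          inner_add_right power2_eq_square algebra_simps inner_commute[of _ u])
    then show "0 \<le> 2 * t * (v \<bullet> (P *v u)) + t\<^sup>2 * (v \<bullet> (P *v v))"
      using psd[of "u + t *\<^sub>R v"] \<open>u \<bullet> (P *v u) = 0\<close> by simp
  qed
  from this[of "P *v u"] show ?thesis by simp
qed

text \<open>Rayleigh: the minimum m of the quadratic form on the unit sphere makes
  \<open>S - m I\<close> positive semidefinite with the minimiser in its kernel, so m is an eigenvalue.\<close>
lemma quadratic_form_ge_min_eigenvalue:
  fixes S :: "real^'n^'n"
  assumes sym: "transpose S = S"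
  shows "min_eigenvalue S * (x \<bullet> x) \<le> x \<bullet> (S *v x)"
proof -
  let ?q = "\<lambda>v. v \<bullet> (S *v v)"
  obtain u where u: "u \<in> sphere (0::real^'n) 1" and umin: "\<And>y. y \<in> sphere 0 1 \<Longrightarrow> ?q u \<le> ?q y"
  proof -
    have "continuous_on (sphere 0 1) ?q" by (intro continuous_intros)
    then show thesis using that continuous_attains_inf[of "sphere (0::real^'n) 1" ?q] by auto
  qed
  define m where "m = ?q u"
  have q_ge: "m * (v \<bullet> v) \<le> ?q v" for v
  proof (cases "v = 0")
    case False
    then have "m \<le> ?q (v /\<^sub>R norm v)" unfolding m_def by (intro umin) simp
    also have "\<dots> = ?q v / (v \<bullet> v)"
      by (simp add: matrix_vector_mult_scaleR power2_eq_square divide_inverse dot_square_norm)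
    finally show ?thesis using False by (simp add: field_simps)
  qed simp
  define P where "P = S - mat m"
  have P_quad: "v \<bullet> (P *v v) = ?q v - m * (v \<bullet> v)" for v
    by (simp add: P_def matrix_vector_mult_diff_rdistrib mat_matrix_vector_mult inner_diff_right)
  have "P *v u = 0"
  proof (rule psd_matrix_kernel)
    show "transpose P = P" using sym by (simp add: P_def transpose_def mat_def vec_eq_iff)
    show "0 \<le> v \<bullet> (P *v v)" for v using q_ge[of v] P_quad[of v] by simp
    show "u \<bullet> (P *v u) = 0" using u P_quad[of u] by (simp add: m_def dot_square_norm)
  qed
  then have "S *v u = m *\<^sub>R u"
    by (simp add: P_def matrix_vector_mult_diff_rdistrib mat_matrix_vector_mult)
  moreover have "u \<noteq> 0" using u by auto
  ultimately have "m \<in> real_eigenvalues S" unfolding real_eigenvalues_def by blast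
  then have "min_eigenvalue S \<le> m"
    unfolding min_eigenvalue_def using finite_real_eigenvalues_symmetric[OF sym] by simp
  then have "min_eigenvalue S * (x \<bullet> x) \<le> m * (x \<bullet> x)"
    by (simp add: mult_right_mono)
  then show ?thesis using q_ge[of x] by simp
qed

lemma quadratic_form_ge_min_eigenvalue_symmetric_part:
  fixes A :: "real^'n^'n"
  shows "min_eigenvalue ((1/2) *\<^sub>R (A + transpose A)) * (x \<bullet> x) \<le> x \<bullet> (A *v x)"
proof -
  have "x \<bullet> (transpose A *v x) = x \<bullet> (A *v x)"
    using dot_lmul_matrix[of x A x] by (simp add: inner_commute)
  then have "x \<bullet> (((1/2) *\<^sub>R (A + transpose A)) *v x) = x \<bullet> (A *v x)"
    by (simp add: scaleR_matrix_vector_assoc[symmetric] matrix_vector_mult_add_rdistrib inner_add_right)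
  moreover have "transpose ((1/2) *\<^sub>R (A + transpose A)) = (1/2) *\<^sub>R (A + transpose A)"
    by (simp add: vec_eq_iff transpose_def)
  ultimately show ?thesis using quadratic_form_ge_min_eigenvalue by metis
qed

lemma inner_square_le_if_norm_le_1:
  fixes u x :: "'a::real_inner"
  assumes "norm u \<le> 1"
  shows "(u \<bullet> x)\<^sup>2 \<le> x \<bullet> x"
proof -
  have "\<bar>u \<bullet> x\<bar> \<le> norm x"
    using Cauchy_Schwarz_ineq2[of u x] assms by (simp add: mult_left_le_one_le order_trans)
  then show ?thesis by (simp add: dot_square_norm) (metis abs_le_square_iff abs_norm_cancel)
qed

lemma quadratic_form_A_d:
  "x \<bullet> (A_d \<phi> \<gamma> N s *v x)
     = (\<Sum>t=1..N. (\<phi> (s t) \<bullet> x) * (\<phi> (s t) \<bullet> x - \<gamma> * (\<phi> (s (Suc t)) \<bullet> x))) / real N"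
  by (simp add: A_d_def scaleR_matrix_vector_assoc[symmetric] matrix_vector_mult_sum_left
      outer_matrix_vector_mult inner_diff_left inner_sum_right inner_commute[of x] mult.commute)

lemma td_g_diff:
  "td_g \<phi> r \<gamma> s s' \<theta> - td_g \<phi> r \<gamma> s s' \<theta>'
     = (\<gamma> * (\<phi> s' \<bullet> (\<theta> - \<theta>')) - \<phi> s \<bullet> (\<theta> - \<theta>')) *\<^sub>R \<phi> s"
  by (simp add: td_g_def inner_diff_right algebra_simps)

lemma td_sum_le_boundary:
  fixes a n :: "nat \<Rightarrow> real" and \<gamma> :: real
  assumes "\<bar>\<gamma>\<bar> \<le> 1" and "\<And>t. 0 \<le> n t" and "\<And>t. n t \<le> 1"
  shows "(\<Sum>t=1..N. (\<gamma> * a (Suc t) - a t)\<^sup>2 * n t)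
       \<le> 2 * (\<Sum>t=1..N. a t * (a t - \<gamma> * a (Suc t))) + \<gamma>\<^sup>2 * ((a (N+1))\<^sup>2 - (a 1)\<^sup>2)"
proof -
  have step: "(\<gamma> * a (Suc t) - a t)\<^sup>2 * n t
      \<le> 2 * (a t * (a t - \<gamma> * a (Suc t))) + \<gamma>\<^sup>2 * ((a (Suc t))\<^sup>2 - (a t)\<^sup>2)" for t
  proof -
    have "(\<gamma> * a (Suc t) - a t)\<^sup>2 * n t \<le> (\<gamma> * a (Suc t) - a t)\<^sup>2"
      using assms(2,3) by (simp add: mult_left_le)
    moreover have "0 \<le> (1 - \<gamma>\<^sup>2) * (a t)\<^sup>2"
      using assms(1) by (simp add: abs_square_le_1)
    ultimately show ?thesis by (simp add: power2_eq_square algebra_simps)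
  qed
  have "(\<Sum>t=1..N. (\<gamma> * a (Suc t) - a t)\<^sup>2 * n t)
      \<le> (\<Sum>t=1..N. 2 * (a t * (a t - \<gamma> * a (Suc t))) + \<gamma>\<^sup>2 * ((a (Suc t))\<^sup>2 - (a t)\<^sup>2))"
    by (rule sum_mono) (rule step)
  also have "\<dots> = 2 * (\<Sum>t=1..N. a t * (a t - \<gamma> * a (Suc t))) + \<gamma>\<^sup>2 * ((a (N+1))\<^sup>2 - (a 1)\<^sup>2)"
    using sum_Suc_diff[of 1 N "\<lambda>t. (a t)\<^sup>2"]
    by (simp add: sum.distrib sum_distrib_left[symmetric])
  finally show ?thesis .
qed

lemma w_fun_le_f_d_plus_boundary:
  assumes \<phi>_le_1: "\<And>x. norm (\<phi> x) \<le> 1" and "\<bar>\<gamma>\<bar> \<le> 1"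
  shows "w_fun \<phi> r \<gamma> N s \<theta> \<le> 2 * f_d \<phi> r \<gamma> N s \<theta>
           + \<gamma>\<^sup>2 / real N * ((\<phi> (s (N+1)) \<bullet> (\<theta> - theta_star \<phi> r \<gamma> N s))\<^sup>2
                              - (\<phi> (s 1) \<bullet> (\<theta> - theta_star \<phi> r \<gamma> N s))\<^sup>2)"
proof -
  define a where "a t = \<phi> (s t) \<bullet> (\<theta> - theta_star \<phi> r \<gamma> N s)" for t
  have "w_fun \<phi> r \<gamma> N s \<theta> = (\<Sum>t=1..N. (\<gamma> * a (Suc t) - a t)\<^sup>2 * (norm (\<phi> (s t)))\<^sup>2) / real N"
    by (simp add: w_fun_def td_g_diff a_def power_mult_distrib)
  also have "\<dots> \<le> (2 * (\<Sum>t=1..N. a t * (a t - \<gamma> * a (Suc t))) + \<gamma>\<^sup>2 * ((a (N+1))\<^sup>2 - (a 1)\<^sup>2)) / real N"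
    using assms by (intro divide_right_mono td_sum_le_boundary) (auto simp: power_le_one)
  also have "\<dots> = 2 * f_d \<phi> r \<gamma> N s \<theta> + \<gamma>\<^sup>2 / real N * ((a (N+1))\<^sup>2 - (a 1)\<^sup>2)"
    by (simp add: f_d_def quadratic_form_A_d a_def add_divide_distrib)
  finally show ?thesis by (simp add: a_def)
qed

lemma lambda_A_mult_inner_square_le_f_d:
  assumes "norm u \<le> 1" and "0 \<le> lambda_A \<phi> \<gamma> N s"
  shows "lambda_A \<phi> \<gamma> N s * (u \<bullet> (\<theta> - theta_star \<phi> r \<gamma> N s))\<^sup>2 \<le> f_d \<phi> r \<gamma> N s \<theta>"
proof -
  let ?x = "\<theta> - theta_star \<phi> r \<gamma> N s"
  have "lambda_A \<phi> \<gamma> N s * (u \<bullet> ?x)\<^sup>2 \<le> lambda_A \<phi> \<gamma> N s * (?x \<bullet> ?x)"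
    using assms by (intro mult_left_mono inner_square_le_if_norm_le_1)
  also have "\<dots> \<le> f_d \<phi> r \<gamma> N s \<theta>"
    using quadratic_form_ge_min_eigenvalue_symmetric_part by (simp add: lambda_A_def f_d_def)
  finally show ?thesis .
qed

theorem mainTheorem6:
  fixes \<phi> :: "'s \<Rightarrow> real ^ 'd" and r :: "'s \<Rightarrow> 's \<Rightarrow> real" and \<gamma> :: real
    and N :: nat and s :: "nat \<Rightarrow> 's" and \<theta> :: "real ^ 'd"
  assumes "finite (UNIV :: 's set)"
    and \<phi>_le_1: "\<And>x. norm (\<phi> x) \<le> 1"
    and "0 \<le> \<gamma>" and "\<gamma> < 1"
    and "N \<ge> 1"
    and "invertible (A_d \<phi> \<gamma> N s)"
    and lambda_A_pos: "lambda_A \<phi> \<gamma> N s > 0"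
  shows "w_fun \<phi> r \<gamma> N s \<theta> \<le> 2 * f_d \<phi> r \<gamma> N s \<theta>
           + \<gamma>\<^sup>2 / real N * ((\<phi> (s (N+1)) \<bullet> (\<theta> - theta_star \<phi> r \<gamma> N s))\<^sup>2
                              - (\<phi> (s 1) \<bullet> (\<theta> - theta_star \<phi> r \<gamma> N s))\<^sup>2)
     \<and> 2 * f_d \<phi> r \<gamma> N s \<theta>
           + \<gamma>\<^sup>2 / real N * ((\<phi> (s (N+1)) \<bullet> (\<theta> - theta_star \<phi> r \<gamma> N s))\<^sup>2
                              - (\<phi> (s 1) \<bullet> (\<theta> - theta_star \<phi> r \<gamma> N s))\<^sup>2)
       \<le> (2 + \<gamma>\<^sup>2 / (real N * lambda_A \<phi> \<gamma> N s)) * f_d \<phi> r \<gamma> N s \<theta>"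
proof -
  define F where "F = f_d \<phi> r \<gamma> N s \<theta>"
  define l where "l = lambda_A \<phi> \<gamma> N s"
  define b where "b t = \<phi> (s t) \<bullet> (\<theta> - theta_star \<phi> r \<gamma> N s)" for t
  have "l * (b (N+1))\<^sup>2 \<le> F"
    unfolding l_def b_def F_def using lambda_A_pos
    by (intro lambda_A_mult_inner_square_le_f_d \<phi>_le_1) simp
  then have "(b (N+1))\<^sup>2 \<le> F / l"
    using lambda_A_pos by (simp add: l_def field_simps)
  then have "(b (N+1))\<^sup>2 - (b 1)\<^sup>2 \<le> F / l"
    using zero_le_power2[of "b 1"] by linarith
  then have "\<gamma>\<^sup>2 / real N * ((b (N+1))\<^sup>2 - (b 1)\<^sup>2) \<le> \<gamma>\<^sup>2 / real N * (F / l)"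
    by (intro mult_left_mono) auto
  then have "2 * F + \<gamma>\<^sup>2 / real N * ((b (N+1))\<^sup>2 - (b 1)\<^sup>2) \<le> (2 + \<gamma>\<^sup>2 / (real N * l)) * F"
    by (simp add: algebra_simps)
  moreover have "\<bar>\<gamma>\<bar> \<le> 1" using \<open>0 \<le> \<gamma>\<close> \<open>\<gamma> < 1\<close> by simp
  ultimately show ?thesis
    using w_fun_le_f_d_plus_boundary[OF \<phi>_le_1] by (simp add: F_def l_def b_def)
qed

end
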